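(* Let $0<q<1$ and $f(z)=\sum_{k\ge0}(-1)^kz^kq^{k(k-1)}$. For every $n\in\mathbb Z$, $$\langle n|S^+_0|n-1\rangle=\langle n-1|S^-_0|n\rangle=q^{|n|}f(q^{2|n|+2}).$$ Moreover, there exist constants $C_1,c>0$ depending only on $q$ such that $\tilde p(m):=\langle1|S^+_m-S^+_{m-1}|0\rangle$ satisfies $|\tilde p(m)|<C_1e^{-c|m|}$ for all $m\in\mathbb Z$.
   Context: Fix $0<q<1$, related to the anisotropy by $q+q^{-1}=2\Delta$ with $\Delta>1$. Let $\Omega^{+-}=\bigotimes_{x\le0}|\!\uparrow\rangle\otimes\bigotimes_{x>0}|\!\downarrow\rangle$, and let $\mathcal H$ be the incomplete tensor product space generated from it. Define the grand-canonical vector $$\psi(z)=\prod_{x\le0}(1+z^{-1}q^{-x}S^-_x)\prod_{x\ge1}(1+zq^{x}S^+_x)\,\Omega^{+-}$$ for $z\neq0$. Expand it as $\psi(z)=\sum_{n\in\mathbb Z}\psi_nz^n$. Explicitly, $\psi_n$ is the sum, over finite sets $A\subset\{x\le0\}$ and $B\subset\{x\ge1\}$ with $|B|-|A|=n$, of $\prod_{x\in A}q^{|x|}\prod_{y\in B}q^{y}$ times the vector obtained from $\Omega^{+-}$ by flipping the spins in $A\cup B$. The vector $\psi_n$ has renormalized total $S^3$ equal to $n$. The kink ground states are $|n\rangle=\psi_n/\|\psi_n\|$, $n\in\mathbb Z$. *)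

theory Defs
  imports "HOL-Analysis.Analysis"
begin

text \<open>Basis configurations of the incomplete tensor product space generated from
  Omega^{+-} are labelled by the finite set F of sites whose spin is flipped
  relative to Omega^{+-} (all up on x \<le> 0, all down on x \<ge> 1).
  A vector is its coefficient function on such sets (values on infinite sets are
  irrelevant: inner products only sum over finite F).\<close>

type_synonym vec = "int set \<Rightarrow> real"

definition spin_up :: "int set \<Rightarrow> int \<Rightarrow> bool" where
  "spin_up F x = (if x \<le> 0 then x \<notin> F else x \<in> F)"

definition flip :: "int \<Rightarrow> int set \<Rightarrow> int set" where
  "flip x F = (if x \<in> F then F - {x} else insert x F)"

text \<open>S^+_x |F> = |flip x F> if the spin at x is down in F, and 0 otherwise;
  S^-_x analogously.  Coefficientwise:\<close>
definition Splus :: "int \<Rightarrow> vec \<Rightarrow> vec" where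
  "Splus x v = (\<lambda>F. if spin_up F x then v (flip x F) else 0)"

definition Sminus :: "int \<Rightarrow> vec \<Rightarrow> vec" where
  "Sminus x v = (\<lambda>F. if spin_up F x then 0 else v (flip x F))"

definition inner_vec :: "vec \<Rightarrow> vec \<Rightarrow> real" where
  "inner_vec u v = (\<Sum>\<^sub>\<infinity>F\<in>{F::int set. finite F}. u F * v F)"

definition norm_vec :: "vec \<Rightarrow> real" where
  "norm_vec v = sqrt (inner_vec v v)"

text \<open>Renormalized total S^3 of the configuration F: |B| - |A|.\<close>
definition charge :: "int set \<Rightarrow> int" where
  "charge F = int (card {x\<in>F. x \<ge> 1}) - int (card {x\<in>F. x \<le> 0})"

definition psi :: "real \<Rightarrow> int \<Rightarrow> vec" where
  "psi q n = (\<lambda>F. if finite F \<and> charge F = n then q ^ (\<Sum>x\<in>F. nat \<bar>x\<bar>) else 0)"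

definition ket :: "real \<Rightarrow> int \<Rightarrow> vec" where
  "ket q n = (\<lambda>F. psi q n F / norm_vec (psi q n))"

definition fq :: "real \<Rightarrow> real \<Rightarrow> real" where
  "fq q z = (\<Sum>k. (-1) ^ k * z ^ k * q ^ (k * (k - 1)))"

definition ptilde :: "real \<Rightarrow> int \<Rightarrow> real" where
  "ptilde q m = inner_vec (ket q 1) (\<lambda>F. Splus m (ket q 0) F - Splus (m - 1) (ket q 0) F)"

end

theory Submission
  imports Defs
begin

text \<open>Write Z n = <psi_n|psi_n> and A n = <psi_n|S+_0|psi_(n-1)>; both are sums of
  q^(2 |F|) over configurations F of charge n (for A n: with site 0 not flipped), where
  |F| is the sum of |x| over the flipped sites x.  Flipping site 0 splits Z n = A n + A (n+1),
  and translating the chain by one site maps charge n-1 bijectively to charge n while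
  raising |F| by n, so Z n = q^(2n) Z (n-1).  Hence A n is the alternating tail sum
  Z n - Z (n+1) + Z (n+2) - ... = Z n f(q^(2n+2)) for n \<ge> 0 (symmetrically for n < 0),
  and dividing by sqrt (Z n Z (n-1)) = q^(-n) Z n gives the matrix elements.
  For the decay, a configuration F contributing to <psi_1|S+_m|psi_0> has weight
  q^(|F| + |F'|) with ||F| - |F'|| = |m|, which is at most q^(|m|/2) q^(|F|/2);
  summing over F gives a bound of order q^(|m|/2).\<close>

section \<open>Spin configurations\<close>

definition site_sign :: "int \<Rightarrow> int" where
  "site_sign x = (if x \<ge> 1 then 1 else -1)"

definition cfg_size :: "int set \<Rightarrow> nat" where
  "cfg_size F = (\<Sum>x\<in>F. nat \<bar>x\<bar>)"

text \<open>Translating the chain by one site also translates Omega^{+-}, and the translate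
  differs from Omega^{+-} exactly at site 1.\<close>
definition cfg_shift :: "int set \<Rightarrow> int set" where
  "cfg_shift F = flip 1 ((\<lambda>x. x + 1) ` F)"

lemma finite_flip [simp]: "finite (flip x F) \<longleftrightarrow> finite F"
  unfolding flip_def by auto

lemma flip_flip [simp]: "flip x (flip x F) = F"
  unfolding flip_def by auto

lemma mem_flip: "y \<in> flip x F \<longleftrightarrow> (if y = x then x \<notin> F else y \<in> F)"
  unfolding flip_def by auto

lemma bij_betw_flip: "bij_betw (flip x) {F. finite F} {F. finite F}"
  by (rule bij_betw_byWitness[where f' = "flip x"]) auto

lemma sum_flip:
  fixes h :: "int \<Rightarrow> 'a::ab_group_add"
  assumes "finite F"
  shows "sum h (flip x F) = (if x \<in> F then sum h F - h x else sum h F + h x)"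
  using assms unfolding flip_def by (simp add: sum_diff1 add.commute)

lemma charge_eq_sum_site_sign:
  assumes "finite F"
  shows "charge F = (\<Sum>x\<in>F. site_sign x)"
proof -
  have "(\<Sum>x\<in>F. site_sign x) = (\<Sum>x\<in>F \<inter> {x. x \<ge> 1}. 1) + (\<Sum>x\<in>F \<inter> - {x. x \<ge> 1}. -1)"
    unfolding site_sign_def by (rule sum.If_cases[OF assms])
  also have "F \<inter> {x. x \<ge> 1} = {x\<in>F. x \<ge> 1}" by auto
  also have "F \<inter> - {x. x \<ge> 1} = {x\<in>F. x \<le> 0}" by auto
  finally show ?thesis unfolding charge_def by simp
qed

lemma charge_flip:
  assumes "finite F"
  shows "charge (flip x F) = (if x \<in> F then charge F - site_sign x else charge F + site_sign x)"
  using assms by (simp add: charge_eq_sum_site_sign sum_flip)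

lemma of_nat_cfg_size: "int (cfg_size F) = (\<Sum>x\<in>F. \<bar>x\<bar>)"
  unfolding cfg_size_def by (simp add: of_nat_sum)

lemma of_nat_cfg_size_flip:
  assumes "finite F"
  shows "int (cfg_size (flip x F)) = (if x \<in> F then int (cfg_size F) - \<bar>x\<bar> else int (cfg_size F) + \<bar>x\<bar>)"
  using assms by (simp add: of_nat_cfg_size sum_flip)

lemma cfg_size_flip_zero:
  assumes "finite F"
  shows "cfg_size (flip 0 F) = cfg_size F"
  using of_nat_cfg_size_flip[OF assms, of 0] by (simp split: if_splits)

lemma sum_shift: "sum h ((\<lambda>x::int. x + 1) ` F) = (\<Sum>x\<in>F. h (x + 1))"
  by (subst sum.reindex) (auto simp: inj_on_def)

lemma charge_cfg_shift:
  assumes "finite F"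
  shows "charge (cfg_shift F) = charge F + 1"
proof -
  have "site_sign (x + 1) = site_sign x + (if x = 0 then 2 else 0)" for x
    unfolding site_sign_def by auto
  then have "charge ((\<lambda>x. x + 1) ` F) = charge F + (if 0 \<in> F then 2 else 0)"
    using assms by (simp add: charge_eq_sum_site_sign sum_shift sum.distrib)
  then show ?thesis
    using assms by (auto simp: cfg_shift_def charge_flip site_sign_def image_iff)
qed

lemma cfg_size_cfg_shift:
  assumes "finite F"
  shows "int (cfg_size (cfg_shift F)) = int (cfg_size F) + charge F + 1"
proof -
  have "\<bar>x + 1\<bar> = \<bar>x\<bar> + site_sign x + (if x = 0 then 2 else 0)" for x :: int
    unfolding site_sign_def by auto
  then have "int (cfg_size ((\<lambda>x. x + 1) ` F)) = int (cfg_size F) + charge F + (if 0 \<in> F then 2 else 0)"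
    using assms by (simp add: of_nat_cfg_size charge_eq_sum_site_sign sum_shift sum.distrib)
  then show ?thesis
    using assms by (auto simp: cfg_shift_def of_nat_cfg_size_flip image_iff)
qed

lemma bij_betw_cfg_shift: "bij_betw cfg_shift {F. finite F} {F. finite F}"
  by (rule bij_betw_byWitness[where f' = "\<lambda>G. (\<lambda>x. x - 1) ` flip 1 G"])
    (auto simp: cfg_shift_def image_image)

section \<open>Vectors and spin operators\<close>

lemma inner_vec_commute: "inner_vec u v = inner_vec v u"
  unfolding inner_vec_def by (simp add: mult.commute)

lemma inner_vec_Sminus: "inner_vec u (Sminus x v) = inner_vec (Splus x u) v"
proof -
  have "inner_vec u (Sminus x v) = (\<Sum>\<^sub>\<infinity>G\<in>{F. finite F}. u (flip x G) * Sminus x v (flip x G))"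
    unfolding inner_vec_def by (rule infsum_reindex_bij_betw[OF bij_betw_flip, symmetric])
  also have "\<dots> = inner_vec (Splus x u) v"
    unfolding inner_vec_def Splus_def Sminus_def spin_up_def by (auto simp: mem_flip intro: infsum_cong)
  finally show ?thesis .
qed

lemma Splus_divide: "Splus x (\<lambda>F. v F / c) = (\<lambda>F. Splus x v F / c)"
  by (simp add: Splus_def fun_eq_iff)

lemma inner_vec_divide: "inner_vec (\<lambda>F. u F / a) (\<lambda>F. v F / b) = inner_vec u v / (a * b)"
proof -
  have "inner_vec (\<lambda>F. u F / a) (\<lambda>F. v F / b) = (\<Sum>\<^sub>\<infinity>F\<in>{F. finite F}. u F * v F * inverse (a * b))"
    unfolding inner_vec_def by (simp add: field_simps)
  then show ?thesis
    unfolding inner_vec_def by (simp add: infsum_cmult_left' divide_inverse)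
qed

lemma abs_inner_vec_le:
  assumes "g summable_on {F. finite F}" and "\<And>F. finite F \<Longrightarrow> \<bar>u F * v F\<bar> \<le> g F"
  shows "\<bar>inner_vec u v\<bar> \<le> (\<Sum>\<^sub>\<infinity>F\<in>{F. finite F}. g F)"
proof -
  have summable: "(\<lambda>F. norm (u F * v F)) summable_on {F. finite F}"
    using assms by (intro summable_on_comparison_test[OF assms(1)]) auto
  then have "\<bar>inner_vec u v\<bar> \<le> (\<Sum>\<^sub>\<infinity>F\<in>{F. finite F}. norm (u F * v F))"
    unfolding inner_vec_def using norm_infsum_bound[of "\<lambda>F. u F * v F"] by simp
  also have "\<dots> \<le> (\<Sum>\<^sub>\<infinity>F\<in>{F. finite F}. g F)"
    using assms by (intro infsum_mono[OF summable]) auto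
  finally show ?thesis .
qed

section \<open>Summable weights\<close>

lemma sum_power_nat_abs_le:
  fixes p :: real
  assumes "0 \<le> p" "p < 1" "finite S"
  shows "(\<Sum>x\<in>S. p ^ nat \<bar>x\<bar>) \<le> 2 / (1 - p)"
proof -
  have geometric: "(\<Sum>j\<in>J. p ^ j) \<le> 1 / (1 - p)" if "finite J" for J
  proof -
    have "(\<Sum>j\<in>J. p ^ j) \<le> (\<Sum>j. p ^ j)"
      using assms that by (intro sum_le_suminf summable_geometric) auto
    then show ?thesis
      using assms by (simp add: suminf_geometric)
  qed
  have "(\<Sum>x\<in>S. p ^ nat \<bar>x\<bar>) = (\<Sum>x\<in>{x\<in>S. x \<ge> 0}. p ^ nat \<bar>x\<bar>) + (\<Sum>x\<in>{x\<in>S. x < 0}. p ^ nat \<bar>x\<bar>)"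
    using assms(3) by (subst sum.union_disjoint[symmetric]) (auto intro: sum.cong)
  also have "(\<Sum>x\<in>{x\<in>S. x \<ge> 0}. p ^ nat \<bar>x\<bar>) = (\<Sum>j\<in>nat ` {x\<in>S. x \<ge> 0}. p ^ j)"
    by (subst sum.reindex) (auto simp: inj_on_def)
  also have "(\<Sum>x\<in>{x\<in>S. x < 0}. p ^ nat \<bar>x\<bar>) = (\<Sum>j\<in>(\<lambda>x. nat (- x)) ` {x\<in>S. x < 0}. p ^ j)"
    by (subst sum.reindex) (auto simp: inj_on_def intro!: sum.cong)
  also have "(\<Sum>j\<in>nat ` {x\<in>S. x \<ge> 0}. p ^ j) + (\<Sum>j\<in>(\<lambda>x. nat (- x)) ` {x\<in>S. x < 0}. p ^ j)
      \<le> 1 / (1 - p) + 1 / (1 - p)"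
    using assms(3) by (intro add_mono geometric) auto
  finally show ?thesis
    by simp
qed

lemma summable_on_power_cfg_size:
  fixes p :: real
  assumes "0 \<le> p" "p < 1"
  shows "(\<lambda>F. p ^ cfg_size F) summable_on {F. finite F}"
proof (rule nonneg_bdd_above_summable_on)
  show "bdd_above (sum (\<lambda>F. p ^ cfg_size F) ` {\<F>. \<F> \<subseteq> {F. finite F} \<and> finite \<F>})"
  proof (rule bdd_aboveI2)
    fix \<F> :: "int set set"
    assume "\<F> \<in> {\<F>. \<F> \<subseteq> {F. finite F} \<and> finite \<F>}"
    then have S: "finite (\<Union>\<F>)" "\<F> \<subseteq> Pow (\<Union>\<F>)"
      by auto
    have "(\<Sum>F\<in>\<F>. p ^ cfg_size F) \<le> (\<Sum>F\<in>Pow (\<Union>\<F>). p ^ cfg_size F)"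
      using S assms by (intro sum_mono2) auto
    also have "\<dots> = (\<Prod>x\<in>\<Union>\<F>. p ^ nat \<bar>x\<bar> + 1)"
      using S by (simp add: prod_add cfg_size_def power_sum)
    also have "\<dots> \<le> (\<Prod>x\<in>\<Union>\<F>. exp (p ^ nat \<bar>x\<bar>))"
      using assms by (intro prod_mono) (auto simp: add.commute[of _ 1] exp_ge_add_one_self)
    also have "\<dots> = exp (\<Sum>x\<in>\<Union>\<F>. p ^ nat \<bar>x\<bar>)"
      using S by (simp add: exp_sum)
    also have "\<dots> \<le> exp (2 / (1 - p))"
      using sum_power_nat_abs_le[OF assms S(1)] by simp
    finally show "(\<Sum>F\<in>\<F>. p ^ cfg_size F) \<le> exp (2 / (1 - p))" .
  qed
qed (use assms in simp)

definition weight_sum :: "real \<Rightarrow> (int set \<Rightarrow> bool) \<Rightarrow> real" where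
  "weight_sum w P = (\<Sum>\<^sub>\<infinity>F\<in>{F. finite F}. if P F then w ^ cfg_size F else 0)"

lemma summable_on_weight:
  fixes w :: real
  assumes "0 \<le> w" "w < 1"
  shows "(\<lambda>F. if P F then w ^ cfg_size F else 0) summable_on {F. finite F}"
  using assms by (intro summable_on_comparison_test[OF summable_on_power_cfg_size]) auto

lemma weight_sum_pos:
  fixes w :: real
  assumes "0 < w" "w < 1" and "finite F" "P F"
  shows "weight_sum w P > 0"
proof -
  have "0 < w ^ cfg_size F"
    using assms by simp
  also have "w ^ cfg_size F = (\<Sum>\<^sub>\<infinity>G\<in>{F}. if P G then w ^ cfg_size G else 0)"
    using assms by simp
  also have "\<dots> \<le> weight_sum w P"
    unfolding weight_sum_def using assms
    by (intro infsum_mono_neutral summable_on_weight) auto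
  finally show ?thesis .
qed

section \<open>Alternating tail sums\<close>

lemma sums_alternating_pair_sums:
  fixes u :: "nat \<Rightarrow> real"
  assumes "u \<longlonglongrightarrow> 0"
  shows "(\<lambda>k. (-1) ^ k * (u k + u (Suc k))) sums u 0"
proof -
  have partial_sums: "(\<Sum>k<K. (-1) ^ k * (u k + u (Suc k))) = u 0 - (-1) ^ K * u K" for K
    by (induction K) (simp_all add: algebra_simps)
  have "(\<lambda>K. \<bar>(-1) ^ K * u K\<bar>) \<longlonglongrightarrow> 0"
    using assms by (simp add: abs_mult tendsto_rabs_zero_iff)
  then have "(\<lambda>K. (-1) ^ K * u K) \<longlonglongrightarrow> 0"
    by (simp only: tendsto_rabs_zero_iff)
  then have "(\<lambda>K. u 0 - (-1) ^ K * u K) \<longlonglongrightarrow> u 0 - 0"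
    by (intro tendsto_diff tendsto_const)
  then show ?thesis
    unfolding sums_def partial_sums by simp
qed

lemma quadratic_recurrence_closed_form:
  fixes z :: "nat \<Rightarrow> real"
  assumes "\<And>k. z (Suc k) = (q\<^sup>2) ^ (N + k + 1) * z k"
  shows "z k = z 0 * ((q ^ (2 * N + 2)) ^ k * q ^ (k * (k - 1)))"
proof (induction k)
  case (Suc k)
  have "(q\<^sup>2) ^ (N + k + 1) * ((q ^ (2 * N + 2)) ^ k * q ^ (k * (k - 1)))
      = q ^ (2 * (N + k + 1) + (2 * N + 2) * k + k * (k - 1))"
    by (simp only: power_mult[symmetric] power_add[symmetric] add.assoc)
  also have "2 * (N + k + 1) + (2 * N + 2) * k + k * (k - 1) = (2 * N + 2) * Suc k + Suc k * (Suc k - 1)"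
    by (cases k) (simp_all add: algebra_simps)
  also have "q ^ \<dots> = (q ^ (2 * N + 2)) ^ Suc k * q ^ (Suc k * (Suc k - 1))"
    by (simp only: power_mult[symmetric] power_add[symmetric])
  finally show ?case
    using assms[of k] Suc.IH by (simp add: mult_ac)
qed simp

lemma quadratic_power_le:
  fixes q :: real
  assumes "0 < q" "q < 1"
  shows "(q ^ (2 * N + 2)) ^ k * q ^ (k * (k - 1)) \<le> q ^ k"
proof -
  have "q ^ (2 * N + 2) \<le> q ^ 1"
    using assms by (intro power_decreasing) auto
  then have "(q ^ (2 * N + 2)) ^ k \<le> q ^ k"
    using assms by (intro power_mono) auto
  moreover have "q ^ (k * (k - 1)) \<le> 1"
    using assms by (simp add: power_le_one)
  ultimately have "(q ^ (2 * N + 2)) ^ k * q ^ (k * (k - 1)) \<le> q ^ k * 1"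
    using assms by (intro mult_mono) auto
  then show ?thesis
    by simp
qed

lemma alternating_tail_eq_fq:
  fixes q :: real and z b :: "nat \<Rightarrow> real"
  assumes q_pos: "0 < q" and q_less_1: "q < 1"
    and z_step: "\<And>k. z (Suc k) = (q\<^sup>2) ^ (N + k + 1) * z k"
    and b_sum: "\<And>k. b k + b (Suc k) = z k"
    and b_nonneg: "\<And>k. 0 \<le> b k"
    and "z 0 \<noteq> 0"
  shows "b 0 = z 0 * fq q (q ^ (2 * N + 2))"
proof -
  define c where "c = z 0"
  define e where "e k = (q ^ (2 * N + 2)) ^ k * q ^ (k * (k - 1))" for k
  have z_eq: "z = (\<lambda>k. c * e k)"
    unfolding c_def e_def using quadratic_recurrence_closed_form[OF z_step] by blast
  have "0 \<le> e k" and "e k \<le> q ^ k" for k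
    unfolding e_def using q_pos q_less_1 quadratic_power_le by auto
  then have "e \<longlonglongrightarrow> 0"
    using q_pos q_less_1 by (intro tendsto_sandwich[of "\<lambda>_. 0" e _ "\<lambda>k. q ^ k"] LIMSEQ_power_zero) auto
  then have "z \<longlonglongrightarrow> 0"
    unfolding z_eq by (rule tendsto_mult_right_zero)
  moreover have "b k \<le> z k" for k
    using b_sum[of k] b_nonneg[of "Suc k"] by linarith
  ultimately have "b \<longlonglongrightarrow> 0"
    using b_nonneg by (intro tendsto_sandwich[of "\<lambda>_. 0" b _ z]) auto
  then have "(\<lambda>k. (-1) ^ k * z k) sums b 0"
    using sums_alternating_pair_sums[of b] by (simp add: b_sum)
  then have "(\<lambda>k. c * ((-1) ^ k * (q ^ (2 * N + 2)) ^ k * q ^ (k * (k - 1)))) sums b 0"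
    by (simp add: z_eq e_def mult_ac)
  then have "(\<lambda>k. c * ((-1) ^ k * (q ^ (2 * N + 2)) ^ k * q ^ (k * (k - 1))) / c) sums (b 0 / c)"
    by (rule sums_divide)
  then have "(\<lambda>k. (-1) ^ k * (q ^ (2 * N + 2)) ^ k * q ^ (k * (k - 1))) sums (b 0 / c)"
    using \<open>z 0 \<noteq> 0\<close> by (simp add: c_def)
  then show ?thesis
    unfolding fq_def c_def using \<open>z 0 \<noteq> 0\<close> by (simp add: sums_iff)
qed

lemma divide_sqrt_scaled_square:
  fixes q y f :: real
  assumes "0 < q" "0 < y"
  shows "(q\<^sup>2) ^ N * y * f / sqrt ((q\<^sup>2) ^ N * y * y) = q ^ N * f"
proof -
  have "(q\<^sup>2) ^ N * y * y = (q ^ N * y)\<^sup>2"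
    by (simp add: power_mult_distrib power2_eq_square power_mult[symmetric] mult_ac)
  then have "sqrt ((q\<^sup>2) ^ N * y * y) = q ^ N * y"
    using assms by simp
  then show ?thesis
    using assms by (simp add: power_mult_distrib power2_eq_square field_simps)
qed

lemma ratio_eq_fq:
  fixes q :: real and Z a :: "int \<Rightarrow> real"
  assumes q_pos: "0 < q" and q_less_1: "q < 1"
    and Z_shift: "\<And>p. (q\<^sup>2) ^ nat (- p) * Z p = (q\<^sup>2) ^ nat p * Z (p - 1)"
    and a_sum: "\<And>n. a n + a (n + 1) = Z n"
    and a_nonneg: "\<And>n. 0 \<le> a n" and Z_pos: "\<And>n. 0 < Z n"
  shows "a n / sqrt (Z n * Z (n - 1)) = q ^ nat \<bar>n\<bar> * fq q (q ^ (2 * nat \<bar>n\<bar> + 2))"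
proof (cases "n \<ge> 0")
  case True
  define N where "N = nat n"
  have "a (n + int 0) = Z (n + int 0) * fq q (q ^ (2 * N + 2))"
  proof (rule alternating_tail_eq_fq[where z = "\<lambda>k. Z (n + int k)" and b = "\<lambda>k. a (n + int k)"])
    show "Z (n + int (Suc k)) = (q\<^sup>2) ^ (N + k + 1) * Z (n + int k)" for k
      using Z_shift[of "n + int k + 1"] True by (simp add: N_def nat_add_distrib add_ac)
    show "a (n + int k) + a (n + int (Suc k)) = Z (n + int k)" for k
      using a_sum[of "n + int k"] by (simp add: add_ac)
  qed (use q_pos q_less_1 a_nonneg Z_pos[of n] in auto)
  moreover have "Z n = (q\<^sup>2) ^ N * Z (n - 1)"
    using Z_shift[of n] True by (simp add: N_def)
  ultimately have "a n / sqrt (Z n * Z (n - 1))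
      = (q\<^sup>2) ^ N * Z (n - 1) * fq q (q ^ (2 * N + 2)) / sqrt ((q\<^sup>2) ^ N * Z (n - 1) * Z (n - 1))"
    by simp
  also have "\<dots> = q ^ N * fq q (q ^ (2 * N + 2))"
    by (rule divide_sqrt_scaled_square[OF q_pos Z_pos])
  finally show ?thesis
    using True by (simp add: N_def)
next
  case False
  define N where "N = nat (- n)"
  have "a (n - int 0) = Z (n - 1 - int 0) * fq q (q ^ (2 * N + 2))"
  proof (rule alternating_tail_eq_fq[where z = "\<lambda>k. Z (n - 1 - int k)" and b = "\<lambda>k. a (n - int k)"])
    show "Z (n - 1 - int (Suc k)) = (q\<^sup>2) ^ (N + k + 1) * Z (n - 1 - int k)" for k
    proof -
      have "nat (- (n - 1 - int k)) = N + k + 1" and "nat (n - 1 - int k) = 0"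
        using False unfolding N_def by arith+
      then show ?thesis
        using Z_shift[of "n - 1 - int k"] by (simp add: diff_diff_eq add_ac)
    qed
    show "a (n - int k) + a (n - int (Suc k)) = Z (n - 1 - int k)" for k
      using a_sum[of "n - 1 - int k"] by (simp add: add_ac diff_diff_eq)
  qed (use q_pos q_less_1 a_nonneg Z_pos[of "n - 1"] in auto)
  moreover have "Z (n - 1) = (q\<^sup>2) ^ N * Z n"
    using Z_shift[of n] False by (simp add: N_def)
  ultimately have "a n / sqrt (Z n * Z (n - 1))
      = (q\<^sup>2) ^ N * Z n * fq q (q ^ (2 * N + 2)) / sqrt ((q\<^sup>2) ^ N * Z n * Z n)"
    by (simp add: mult_ac)
  also have "\<dots> = q ^ N * fq q (q ^ (2 * N + 2))"
    by (rule divide_sqrt_scaled_square[OF q_pos Z_pos])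
  finally show ?thesis
    using False by (simp add: N_def)
qed

lemma power_nat_abs_pred_le:
  fixes r :: real
  assumes "0 < r" "r \<le> 1"
  shows "r ^ nat \<bar>m - 1\<bar> \<le> r ^ nat \<bar>m\<bar> / r"
proof -
  have "nat \<bar>m\<bar> \<le> nat \<bar>m - 1\<bar> + 1"
    by arith
  then have "r ^ (nat \<bar>m - 1\<bar> + 1) \<le> r ^ nat \<bar>m\<bar>"
    using assms by (intro power_decreasing) auto
  then show ?thesis
    using assms by (simp add: field_simps)
qed

lemma exp_decay_of_geometric_bound:
  fixes f :: "int \<Rightarrow> real"
  assumes "0 < r" "r < 1" and "\<And>m. \<bar>f m\<bar> \<le> K * r ^ nat \<bar>m\<bar>"
  shows "\<exists>C1 c. C1 > 0 \<and> c > 0 \<and> (\<forall>m. \<bar>f m\<bar> < C1 * exp (- c * \<bar>real_of_int m\<bar>))"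
proof (intro exI conjI allI)
  fix m :: int
  have "exp (- (- ln r) * \<bar>real_of_int m\<bar>) = exp (real (nat \<bar>m\<bar>) * ln r)"
    by simp
  also have "\<dots> = r ^ nat \<bar>m\<bar>"
    using assms(1) by (simp only: exp_of_nat_mult exp_ln)
  finally have "r ^ nat \<bar>m\<bar> = exp (- (- ln r) * \<bar>real_of_int m\<bar>)" ..
  have "\<bar>f m\<bar> \<le> \<bar>K\<bar> * r ^ nat \<bar>m\<bar>"
    using assms(1) by (intro order_trans[OF assms(3)] mult_right_mono) auto
  also have "\<dots> < (\<bar>K\<bar> + 1) * r ^ nat \<bar>m\<bar>"
    using assms(1) by (simp add: distrib_right)
  finally show "\<bar>f m\<bar> < (\<bar>K\<bar> + 1) * exp (- (- ln r) * \<bar>real_of_int m\<bar>)"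
    unfolding \<open>r ^ nat \<bar>m\<bar> = _\<close> .
qed (use assms in auto)

section \<open>The kink states\<close>

lemma psi_eq: "psi q n F = (if finite F \<and> charge F = n then q ^ cfg_size F else 0)"
  by (simp add: psi_def cfg_size_def)

text \<open>psi_hop q n is <psi_n|S+_0|psi_(n-1)>, see inner_psi_Splus_zero.\<close>

definition psi_norm_sq :: "real \<Rightarrow> int \<Rightarrow> real" where
  "psi_norm_sq q n = weight_sum (q\<^sup>2) (\<lambda>F. charge F = n)"

definition psi_hop :: "real \<Rightarrow> int \<Rightarrow> real" where
  "psi_hop q n = weight_sum (q\<^sup>2) (\<lambda>F. charge F = n \<and> 0 \<notin> F)"

context
  fixes q :: real
  assumes q_pos: "0 < q" and q_less_1: "q < 1"
begin

lemma summable_on_sq_weight: "(\<lambda>F. if P F then (q\<^sup>2) ^ cfg_size F else 0) summable_on {F. finite F}"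
  using q_pos q_less_1 by (intro summable_on_weight) (auto simp: power_less_one_iff)

lemma psi_norm_sq_shift: "(q\<^sup>2) ^ nat (- p) * psi_norm_sq q p = (q\<^sup>2) ^ nat p * psi_norm_sq q (p - 1)"
proof -
  let ?g = "\<lambda>F. if charge F = p then (q\<^sup>2) ^ cfg_size F else 0"
  have "psi_norm_sq q p = (\<Sum>\<^sub>\<infinity>F\<in>{F. finite F}. ?g (cfg_shift F))"
    unfolding psi_norm_sq_def weight_sum_def
    by (rule infsum_reindex_bij_betw[OF bij_betw_cfg_shift, symmetric])
  then have "(q\<^sup>2) ^ nat (- p) * psi_norm_sq q p
      = (\<Sum>\<^sub>\<infinity>F\<in>{F. finite F}. (q\<^sup>2) ^ nat (- p) * ?g (cfg_shift F))"
    by (simp add: infsum_cmult_right')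
  also have "\<dots> = (\<Sum>\<^sub>\<infinity>F\<in>{F. finite F}. (q\<^sup>2) ^ nat p * (if charge F = p - 1 then (q\<^sup>2) ^ cfg_size F else 0))"
  proof (rule infsum_cong)
    fix F :: "int set"
    assume "F \<in> {F. finite F}"
    then have "charge F = p - 1 \<Longrightarrow> cfg_size (cfg_shift F) + nat (- p) = cfg_size F + nat p"
      using cfg_size_cfg_shift[of F] by simp
    then show "(q\<^sup>2) ^ nat (- p) * ?g (cfg_shift F)
        = (q\<^sup>2) ^ nat p * (if charge F = p - 1 then (q\<^sup>2) ^ cfg_size F else 0)"
      using \<open>F \<in> _\<close> charge_cfg_shift[of F] by (auto simp: power_add[symmetric] add.commute)
  qed
  also have "\<dots> = (q\<^sup>2) ^ nat p * psi_norm_sq q (p - 1)"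
    unfolding psi_norm_sq_def weight_sum_def by (rule infsum_cmult_right')
  finally show ?thesis .
qed

lemma psi_hop_add_psi_hop: "psi_hop q n + psi_hop q (n + 1) = psi_norm_sq q n"
proof -
  let ?in = "\<lambda>F. if charge F = n \<and> 0 \<in> F then (q\<^sup>2) ^ cfg_size F else 0"
  let ?out = "\<lambda>F. if charge F = n \<and> 0 \<notin> F then (q\<^sup>2) ^ cfg_size F else 0"
  have "psi_hop q (n + 1) = (\<Sum>\<^sub>\<infinity>F\<in>{F. finite F}. ?in (flip 0 F))"
    unfolding psi_hop_def weight_sum_def
    by (intro infsum_cong) (auto simp: mem_flip charge_flip cfg_size_flip_zero site_sign_def)
  also have "\<dots> = (\<Sum>\<^sub>\<infinity>F\<in>{F. finite F}. ?in F)"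
    by (rule infsum_reindex_bij_betw[OF bij_betw_flip])
  finally have "psi_hop q n + psi_hop q (n + 1) = (\<Sum>\<^sub>\<infinity>F\<in>{F. finite F}. ?out F + ?in F)"
    unfolding psi_hop_def weight_sum_def
    by (simp add: infsum_add[OF summable_on_sq_weight summable_on_sq_weight])
  also have "\<dots> = psi_norm_sq q n"
    unfolding psi_norm_sq_def weight_sum_def by (rule infsum_cong) auto
  finally show ?thesis .
qed

lemma psi_hop_nonneg: "psi_hop q n \<ge> 0"
  unfolding psi_hop_def weight_sum_def by (intro infsum_nonneg) auto

lemma psi_norm_sq_pos: "psi_norm_sq q n > 0"
proof (induction n rule: int_induct[where k = 0])
  case base
  have "charge {} = 0"
    by (simp add: charge_def)
  then show ?case
    unfolding psi_norm_sq_def using q_pos q_less_1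
    by (intro weight_sum_pos[of _ "{}"]) (auto simp: power_less_one_iff)
next
  case (step1 i)
  then show ?case
    using psi_norm_sq_shift[of "i + 1"] q_pos by simp
next
  case (step2 i)
  have "0 < (q\<^sup>2) ^ nat (- i) * psi_norm_sq q i"
    using step2 q_pos by simp
  then show ?case
    using psi_norm_sq_shift[of i] \<open>i \<le> 0\<close> by simp
qed

lemma norm_vec_psi: "norm_vec (psi q n) = sqrt (psi_norm_sq q n)"
  unfolding norm_vec_def inner_vec_def psi_norm_sq_def weight_sum_def
  by (intro arg_cong[where f = sqrt] infsum_cong) (auto simp: psi_eq power_mult_distrib power2_eq_square)

lemma inner_psi_Splus_zero: "inner_vec (psi q n) (Splus 0 (psi q (n - 1))) = psi_hop q n"
  unfolding inner_vec_def psi_hop_def weight_sum_def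
proof (rule infsum_cong)
  fix F :: "int set"
  assume "F \<in> {F. finite F}"
  then show "psi q n F * Splus 0 (psi q (n - 1)) F
      = (if charge F = n \<and> 0 \<notin> F then (q\<^sup>2) ^ cfg_size F else 0)"
    by (auto simp: psi_eq Splus_def spin_up_def mem_flip charge_flip cfg_size_flip_zero site_sign_def
        power_mult_distrib power2_eq_square)
qed

lemma ket_eq: "ket q n = (\<lambda>F. psi q n F / sqrt (psi_norm_sq q n))"
  by (simp add: ket_def norm_vec_psi)

lemma inner_ket_Splus_zero:
  "inner_vec (ket q n) (Splus 0 (ket q (n - 1))) = q ^ nat \<bar>n\<bar> * fq q (q ^ (2 * nat \<bar>n\<bar> + 2))"
proof -
  have "inner_vec (ket q n) (Splus 0 (ket q (n - 1))) = psi_hop q n / sqrt (psi_norm_sq q n * psi_norm_sq q (n - 1))"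
    by (simp add: ket_eq Splus_divide inner_vec_divide inner_psi_Splus_zero real_sqrt_mult)
  also have "\<dots> = q ^ nat \<bar>n\<bar> * fq q (q ^ (2 * nat \<bar>n\<bar> + 2))"
    by (rule ratio_eq_fq[OF q_pos q_less_1 psi_norm_sq_shift psi_hop_add_psi_hop psi_hop_nonneg psi_norm_sq_pos])
  finally show ?thesis .
qed

lemma inner_ket_Sminus_zero:
  "inner_vec (ket q (n - 1)) (Sminus 0 (ket q n)) = q ^ nat \<bar>n\<bar> * fq q (q ^ (2 * nat \<bar>n\<bar> + 2))"
  by (simp add: inner_vec_Sminus inner_vec_commute[of "Splus 0 _"] inner_ket_Splus_zero)

lemma abs_psi_Splus_le: "\<bar>psi q n F * Splus m (psi q n') F\<bar> \<le> sqrt q ^ nat \<bar>m\<bar> * sqrt q ^ cfg_size F"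
proof (cases "finite F \<and> charge F = n \<and> spin_up F m \<and> charge (flip m F) = n'")
  case True
  have "\<bar>int (cfg_size (flip m F)) - int (cfg_size F)\<bar> = \<bar>m\<bar>"
    using True of_nat_cfg_size_flip[of F m] by auto
  then have "nat \<bar>m\<bar> + cfg_size F \<le> 2 * cfg_size F + 2 * cfg_size (flip m F)"
    by linarith
  then have "sqrt q ^ (2 * cfg_size F + 2 * cfg_size (flip m F)) \<le> sqrt q ^ (nat \<bar>m\<bar> + cfg_size F)"
    using q_pos q_less_1 by (intro power_decreasing) auto
  moreover have "sqrt q ^ (2 * cfg_size F + 2 * cfg_size (flip m F)) = q ^ cfg_size F * q ^ cfg_size (flip m F)"
    using q_pos by (simp add: power_add power_mult)
  ultimately show ?thesis
    using True q_pos by (simp add: psi_eq Splus_def power_add)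
next
  case False
  then show ?thesis
    using q_pos by (auto simp: psi_eq Splus_def)
qed

lemma ptilde_eq:
  "ptilde q m = inner_vec (psi q 1) (\<lambda>F. Splus m (psi q 0) F - Splus (m - 1) (psi q 0) F)
      / (sqrt (psi_norm_sq q 1) * sqrt (psi_norm_sq q 0))"
proof -
  have "ptilde q m = inner_vec (\<lambda>F. psi q 1 F / sqrt (psi_norm_sq q 1))
      (\<lambda>F. (Splus m (psi q 0) F - Splus (m - 1) (psi q 0) F) / sqrt (psi_norm_sq q 0))"
    by (simp add: ptilde_def ket_eq Splus_divide diff_divide_distrib)
  then show ?thesis
    by (simp only: inner_vec_divide)
qed

lemma abs_ptilde_le: "\<exists>K. \<forall>m. \<bar>ptilde q m\<bar> \<le> K * sqrt q ^ nat \<bar>m\<bar>"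
proof (intro exI allI)
  fix m :: int
  define r where "r = sqrt q"
  define s where "s = sqrt (psi_norm_sq q 1) * sqrt (psi_norm_sq q 0)"
  define M where "M = (\<Sum>\<^sub>\<infinity>F\<in>{F. finite F}. r ^ cfg_size F)"
  have r: "0 < r" "r < 1" and "0 < s"
    using q_pos q_less_1 psi_norm_sq_pos by (auto simp: r_def s_def)
  have summable: "(\<lambda>F. r ^ cfg_size F) summable_on {F. finite F}"
    using r by (intro summable_on_power_cfg_size) auto
  have "M \<ge> 0"
    unfolding M_def using r by (intro infsum_nonneg) auto
  have "\<bar>ptilde q m\<bar> = \<bar>inner_vec (psi q 1) (\<lambda>F. Splus m (psi q 0) F - Splus (m - 1) (psi q 0) F)\<bar> / s"
    using \<open>0 < s\<close> by (simp add: ptilde_eq s_def)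
  also have "\<dots> \<le> (\<Sum>\<^sub>\<infinity>F\<in>{F. finite F}. (r ^ nat \<bar>m\<bar> + r ^ nat \<bar>m - 1\<bar>) * r ^ cfg_size F) / s"
  proof (intro divide_right_mono abs_inner_vec_le)
    fix F :: "int set"
    show "\<bar>psi q 1 F * (Splus m (psi q 0) F - Splus (m - 1) (psi q 0) F)\<bar>
        \<le> (r ^ nat \<bar>m\<bar> + r ^ nat \<bar>m - 1\<bar>) * r ^ cfg_size F"
      using abs_psi_Splus_le[of 1 F m 0] abs_psi_Splus_le[of 1 F "m - 1" 0]
      unfolding r_def right_diff_distrib distrib_right by (metis abs_triangle_ineq4 add_mono order_trans)
  qed (use summable \<open>0 < s\<close> in \<open>auto intro: summable_on_cmult_right\<close>)
  also have "\<dots> = (r ^ nat \<bar>m\<bar> + r ^ nat \<bar>m - 1\<bar>) * M / s"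
    unfolding M_def by (simp add: infsum_cmult_right')
  also have "\<dots> \<le> ((1 + 1 / r) * r ^ nat \<bar>m\<bar>) * M / s"
    using power_nat_abs_pred_le[of r m] r \<open>M \<ge> 0\<close> \<open>0 < s\<close>
    by (intro divide_right_mono mult_right_mono) (auto simp: algebra_simps)
  finally show "\<bar>ptilde q m\<bar> \<le> (1 + 1 / r) * M / s * sqrt q ^ nat \<bar>m\<bar>"
    by (simp add: r_def mult_ac)
qed

end

theorem lemmaA:
  fixes q :: real
  assumes "0 < q" and "q < 1"
  shows "(\<forall>n::int.
            inner_vec (ket q n) (Splus 0 (ket q (n - 1))) = q ^ nat \<bar>n\<bar> * fq q (q ^ (2 * nat \<bar>n\<bar> + 2))
          \<and> inner_vec (ket q (n - 1)) (Sminus 0 (ket q n)) = q ^ nat \<bar>n\<bar> * fq q (q ^ (2 * nat \<bar>n\<bar> + 2)))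
       \<and> (\<exists>C1 c. C1 > 0 \<and> c > 0 \<and> (\<forall>m::int. \<bar>ptilde q m\<bar> < C1 * exp (- c * \<bar>real_of_int m\<bar>)))"
proof -
  obtain K where "\<And>m. \<bar>ptilde q m\<bar> \<le> K * sqrt q ^ nat \<bar>m\<bar>"
    using abs_ptilde_le[OF assms] by blast
  then have "\<exists>C1 c. C1 > 0 \<and> c > 0 \<and> (\<forall>m::int. \<bar>ptilde q m\<bar> < C1 * exp (- c * \<bar>real_of_int m\<bar>))"
    using assms by (intro exp_decay_of_geometric_bound[of "sqrt q"]) auto
  then show ?thesis
    using inner_ket_Splus_zero[OF assms] inner_ket_Sminus_zero[OF assms] by blast
qed

end
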